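(* Consider the reduced return maps of the Bowtie network described in the context, with sets $\mathcal{E}_n$ and $\tilde{\mathcal{E}}_n$ as defined there. If $\delta>0$ then $\mathcal{E}_1=\mathcal{E}_2$. If $\tilde\delta>0$ then $\tilde{\mathcal{E}}_1=\tilde{\mathcal{E}}_2$.
   Context: Setting (Bowtie network). A $\mathbb{Z}_2^5$-equivariant vector field on $\mathbb{R}^5$ has equilibria $\xi_j$ on the $x_j$-axes and two heteroclinic cycles $R=[\xi_1\to\xi_2\to\xi_3\to\xi_1]$ and $L=[\xi_2\to\xi_4\to\xi_5\to\xi_2]$, each connection $[\xi_i\to\xi_j]$ lying in the $x_ix_j$-plane. All eigenvalues are real: at $\xi_j$, $-c_{jk}<0$ is the contracting and $e_{jk}>0$ the expanding eigenvalue in the $x_k$-direction; concretely the positive numbers $e_{12},c_{13},c_{14},c_{15}$ (at $\xi_1$), $c_{21},c_{25},e_{23},e_{24}$ (at $\xi_2$), $e_{31},c_{32},c_{34},c_{35}$ (at $\xi_3$), $e_{45},c_{41},c_{42},c_{43}$ (at $\xi_4$), $e_{52},c_{51},c_{53},c_{54}$ (at $\xi_5$). Global maps are the identity and local maps are given by the linearized flow; it is assumed throughout that $e_{23}>e_{24}$. Define $\rho=\frac{c_{42}c_{54}c_{25}}{e_{24}e_{45}e_{52}}$, $\tilde\rho=\frac{c_{32}c_{13}c_{21}}{e_{23}e_{31}e_{12}}$, $\nu=-\frac{e_{23}}{e_{24}}+\frac{c_{25}c_{43}}{e_{24}e_{45}}+\frac{c_{53}c_{42}c_{25}}{e_{45}e_{24}e_{52}}$,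 $\tilde\nu=-\frac{e_{24}}{e_{23}}+\frac{c_{21}c_{34}}{e_{23}e_{31}}+\frac{c_{14}c_{32}c_{21}}{e_{31}e_{23}e_{12}}$, $\mu=\frac{c_{21}}{e_{24}}+\frac{c_{25}c_{41}}{e_{24}e_{45}}+\frac{c_{51}c_{42}c_{25}}{e_{45}e_{24}e_{52}}$, $\tilde\mu=\frac{c_{25}}{e_{23}}+\frac{c_{21}c_{35}}{e_{23}e_{31}}+\frac{c_{15}c_{32}c_{21}}{e_{31}e_{23}e_{12}}$, $\delta=\frac{c_{43}}{e_{45}}+\frac{c_{53}c_{42}}{e_{52}e_{45}}-\frac{e_{23}c_{54}c_{42}}{e_{52}e_{45}e_{24}}$, $\tilde\delta=\frac{c_{34}}{e_{31}}+\frac{c_{14}c_{32}}{e_{12}e_{31}}-\frac{e_{24}c_{13}c_{32}}{e_{12}e_{31}e_{23}}$. Reduced return maps. In the relevant coordinates $(x_3,x_4,x_5)$ of the cross section $H_1^{\mathrm{out},2}$ (identified with $H_2^{\mathrm{in},1}$), points which after passing $\xi_2$ follow the connection to $\xi_3$ form $D_{h_R}=\{(x_3,x_4,x_5): 0<x_3<1,\ x_4>0,\ x_5>0,\ x_4<x_3^{e_{24}/e_{23}}\}$, and the return map around $R$ is $h_R:D_{h_R}\to(0,\infty)^3$, $h_R(x_3,x_4,x_5)=(x_3^{\tilde\rho},x_4x_3^{\tilde\nu},x_5x_3^{\tilde\mu})$. In the relevant coordinates $(x_1,x_3,x_4)$ of $H_5^{\mathrm{out},2}$ (identified with $H_2^{\mathrm{in},5}$),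 points which after passing $\xi_2$ follow the connection to $\xi_4$ form $D_{h_L}=\{(x_1,x_3,x_4): x_1>0,\ x_3>0,\ 0<x_4<1,\ x_4>x_3^{e_{24}/e_{23}}\}$, and the return map around $L$ is $h_L:D_{h_L}\to(0,\infty)^3$, $h_L(x_1,x_3,x_4)=(x_1x_4^{\mu},x_3x_4^{\nu},x_4^{\rho})$. For $n\ge1$, $\tilde{\mathcal{E}}_n$ is the set of points $x$ such that $x,h_R(x),\dots,h_R^{n-1}(x)$ all lie in $D_{h_R}$ (points taking at least $n$ turns around the $R$-cycle), and $\mathcal{E}_n$ is the set of points $y$ such that $y,h_L(y),\dots,h_L^{n-1}(y)$ all lie in $D_{h_L}$ (points taking at least $n$ turns around the $L$-cycle). In particular $\tilde{\mathcal{E}}_1=D_{h_R}$, $\mathcal{E}_1=D_{h_L}$. *)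

theory Defs
  imports Complex_Main
begin

text \<open>Eigenvalue data of the Bowtie network (all positive reals).\<close>
record bowtie =
  e12 :: real  c13 :: real  c14 :: real  c15 :: real
  c21 :: real  c25 :: real  e23 :: real  e24 :: real
  e31 :: real  c32 :: real  c34 :: real  c35 :: real
  e45 :: real  c41 :: real  c42 :: real  c43 :: real
  e52 :: real  c51 :: real  c53 :: real  c54 :: real

definition bowtie_admissible :: "bowtie \<Rightarrow> bool" where
  "bowtie_admissible P \<longleftrightarrow>
     e12 P > 0 \<and> c13 P > 0 \<and> c14 P > 0 \<and> c15 P > 0 \<and>
     c21 P > 0 \<and> c25 P > 0 \<and> e23 P > 0 \<and> e24 P > 0 \<and>
     e31 P > 0 \<and> c32 P > 0 \<and> c34 P > 0 \<and> c35 P > 0 \<and>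
     e45 P > 0 \<and> c41 P > 0 \<and> c42 P > 0 \<and> c43 P > 0 \<and>
     e52 P > 0 \<and> c51 P > 0 \<and> c53 P > 0 \<and> c54 P > 0 \<and>
     e23 P > e24 P"

definition rho :: "bowtie \<Rightarrow> real" where
  "rho P = c42 P * c54 P * c25 P / (e24 P * e45 P * e52 P)"
definition trho :: "bowtie \<Rightarrow> real" where
  "trho P = c32 P * c13 P * c21 P / (e23 P * e31 P * e12 P)"
definition nu :: "bowtie \<Rightarrow> real" where
  "nu P = - e23 P / e24 P + c25 P * c43 P / (e24 P * e45 P)
          + c53 P * c42 P * c25 P / (e45 P * e24 P * e52 P)"
definition tnu :: "bowtie \<Rightarrow> real" where
  "tnu P = - e24 P / e23 P + c21 P * c34 P / (e23 P * e31 P)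
          + c14 P * c32 P * c21 P / (e31 P * e23 P * e12 P)"
definition mu :: "bowtie \<Rightarrow> real" where
  "mu P = c21 P / e24 P + c25 P * c41 P / (e24 P * e45 P)
          + c51 P * c42 P * c25 P / (e45 P * e24 P * e52 P)"
definition tmu :: "bowtie \<Rightarrow> real" where
  "tmu P = c25 P / e23 P + c21 P * c35 P / (e23 P * e31 P)
          + c15 P * c32 P * c21 P / (e31 P * e23 P * e12 P)"
definition delta :: "bowtie \<Rightarrow> real" where
  "delta P = c43 P / e45 P + c53 P * c42 P / (e52 P * e45 P)
          - e23 P * c54 P * c42 P / (e52 P * e45 P * e24 P)"
definition tdelta :: "bowtie \<Rightarrow> real" where
  "tdelta P = c34 P / e31 P + c14 P * c32 P / (e12 P * e31 P)
          - e24 P * c13 P * c32 P / (e12 P * e31 P * e23 P)"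

definition D_hR :: "bowtie \<Rightarrow> (real \<times> real \<times> real) set" where
  "D_hR P = {(x3, x4, x5). 0 < x3 \<and> x3 < 1 \<and> 0 < x4 \<and> 0 < x5 \<and>
                           x4 < x3 powr (e24 P / e23 P)}"
definition h_R :: "bowtie \<Rightarrow> real \<times> real \<times> real \<Rightarrow> real \<times> real \<times> real" where
  "h_R P = (\<lambda>(x3, x4, x5). (x3 powr trho P, x4 * x3 powr tnu P, x5 * x3 powr tmu P))"

definition D_hL :: "bowtie \<Rightarrow> (real \<times> real \<times> real) set" where
  "D_hL P = {(x1, x3, x4). 0 < x1 \<and> 0 < x3 \<and> 0 < x4 \<and> x4 < 1 \<and>
                           x4 > x3 powr (e24 P / e23 P)}"
definition h_L :: "bowtie \<Rightarrow> real \<times> real \<times> real \<Rightarrow> real \<times> real \<times> real" where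
  "h_L P = (\<lambda>(x1, x3, x4). (x1 * x4 powr mu P, x3 * x4 powr nu P, x4 powr rho P))"

definition turns_set :: "('a \<Rightarrow> 'a) \<Rightarrow> 'a set \<Rightarrow> nat \<Rightarrow> 'a set" where
  "turns_set h D n = {x. \<forall>k<n. (h ^^ k) x \<in> D}"

definition E_L :: "bowtie \<Rightarrow> nat \<Rightarrow> (real \<times> real \<times> real) set" where
  "E_L P n = turns_set (h_L P) (D_hL P) n"
definition E_R :: "bowtie \<Rightarrow> nat \<Rightarrow> (real \<times> real \<times> real) set" where
  "E_R P n = turns_set (h_R P) (D_hR P) n"

end

theory Submission
  imports Defs
begin

text \<open>With \<open>a = e24/e23\<close> the two domains are separated by the curve \<open>x4 = x3 powr a\<close>.
  For a point of \<open>D_hL\<close> one turn around \<open>L\<close> gives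
  \<open>(x3 x4^\<nu>)^a < x4^(1 + \<nu> a) < x4^\<rho>\<close>, because \<open>x4 < 1\<close> and the exponent gap
  \<open>1 + \<nu> a - \<rho>\<close> equals \<open>(c25/e23) \<delta> > 0\<close>; hence \<open>h_L\<close> maps \<open>D_hL\<close> into itself, and
  every point taking one turn around \<open>L\<close> takes a second one. Symmetrically the gap
  \<open>a + \<tilde>\<nu> - \<tilde>\<rho> a = (c21/e23) \<tilde>\<delta>\<close> makes \<open>D_hR\<close> forward invariant under \<open>h_R\<close>.\<close>

lemma turns_set_eq_if_invariant:
  assumes invariant: "\<And>x. x \<in> D \<Longrightarrow> h x \<in> D" and "n \<ge> 1"
  shows "turns_set h D n = D"
proof
  show "turns_set h D n \<subseteq> D"
    using \<open>n \<ge> 1\<close> unfolding turns_set_def by force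
  have "(h ^^ k) x \<in> D" if "x \<in> D" for x k
    using that by (induction k) (simp_all add: invariant)
  then show "D \<subseteq> turns_set h D n"
    unfolding turns_set_def by blast
qed

lemma L_exponent_gap_eq:
  assumes "bowtie_admissible P"
  shows "1 + nu P * (e24 P / e23 P) - rho P = c25 P / e23 P * delta P"
  using assms unfolding bowtie_admissible_def nu_def rho_def delta_def
  by (simp add: field_simps)

lemma R_exponent_gap_eq:
  assumes "bowtie_admissible P"
  shows "e24 P / e23 P + tnu P - trho P * (e24 P / e23 P) = c21 P / e23 P * tdelta P"
  using assms unfolding bowtie_admissible_def tnu_def trho_def tdelta_def
  by (simp add: field_simps)

lemma h_L_maps_D_hL:
  assumes adm: "bowtie_admissible P" and "delta P > 0" and x: "x \<in> D_hL P"
  shows "h_L P x \<in> D_hL P"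
proof -
  obtain x1 x3 x4 where x_eq: "x = (x1, x3, x4)" by (cases x)
  define a where "a = e24 P / e23 P"
  have "c25 P > 0" "e23 P > 0" and rho_pos: "rho P > 0"
    using adm unfolding bowtie_admissible_def rho_def by auto
  then have gap: "rho P < 1 + nu P * a"
    using L_exponent_gap_eq[OF adm] \<open>delta P > 0\<close> unfolding a_def
    by (smt (verit) divide_pos_pos mult_pos_pos)
  have coords: "0 < x1" "0 < x3" "0 < x4" "x4 < 1" "x3 powr a < x4"
    using x unfolding D_hL_def x_eq a_def by auto
  have "(x3 * x4 powr nu P) powr a = x3 powr a * x4 powr (nu P * a)"
    using coords by (simp add: powr_mult powr_powr)
  also have "\<dots> < x4 * x4 powr (nu P * a)"
    using coords by (intro mult_strict_right_mono) auto
  also have "\<dots> = x4 powr (1 + nu P * a)"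
    using coords by (simp add: powr_add)
  also have "\<dots> < x4 powr rho P"
    using coords gap by (intro powr_less_mono') auto
  finally have "(x3 * x4 powr nu P) powr a < x4 powr rho P" .
  moreover have "x4 powr rho P < 1"
    using coords rho_pos powr_less_mono'[of x4 0 "rho P"] by simp
  ultimately show ?thesis
    using coords unfolding x_eq h_L_def D_hL_def a_def by auto
qed

lemma h_R_maps_D_hR:
  assumes adm: "bowtie_admissible P" and "tdelta P > 0" and x: "x \<in> D_hR P"
  shows "h_R P x \<in> D_hR P"
proof -
  obtain x3 x4 x5 where x_eq: "x = (x3, x4, x5)" by (cases x)
  define a where "a = e24 P / e23 P"
  have "c21 P > 0" "e23 P > 0" and trho_pos: "trho P > 0"
    using adm unfolding bowtie_admissible_def trho_def by auto
  then have gap: "trho P * a < a + tnu P"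
    using R_exponent_gap_eq[OF adm] \<open>tdelta P > 0\<close> unfolding a_def
    by (smt (verit) divide_pos_pos mult_pos_pos)
  have coords: "0 < x3" "x3 < 1" "0 < x4" "0 < x5" "x4 < x3 powr a"
    using x unfolding D_hR_def x_eq a_def by auto
  have "x4 * x3 powr tnu P < x3 powr a * x3 powr tnu P"
    using coords by (intro mult_strict_right_mono) auto
  also have "\<dots> = x3 powr (a + tnu P)"
    by (simp add: powr_add)
  also have "\<dots> < x3 powr (trho P * a)"
    using coords gap by (intro powr_less_mono') auto
  also have "\<dots> = (x3 powr trho P) powr a"
    by (simp add: powr_powr)
  finally have "x4 * x3 powr tnu P < (x3 powr trho P) powr a" .
  moreover have "x3 powr trho P < 1"
    using coords trho_pos powr_less_mono'[of x3 0 "trho P"] by simp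
  ultimately show ?thesis
    using coords unfolding x_eq h_R_def D_hR_def a_def by auto
qed

theorem lemma4p2:
  fixes P :: bowtie
  assumes "bowtie_admissible P"
  shows "(delta P > 0 \<longrightarrow> E_L P 1 = E_L P 2) \<and>
         (tdelta P > 0 \<longrightarrow> E_R P 1 = E_R P 2)"
proof (intro conjI impI)
  assume "delta P > 0"
  then have "E_L P n = D_hL P" if "n \<ge> 1" for n
    using h_L_maps_D_hL[OF assms] that
    unfolding E_L_def by (intro turns_set_eq_if_invariant)
  then show "E_L P 1 = E_L P 2" by simp
next
  assume "tdelta P > 0"
  then have "E_R P n = D_hR P" if "n \<ge> 1" for n
    using h_R_maps_D_hR[OF assms] that
    unfolding E_R_def by (intro turns_set_eq_if_invariant)
  then show "E_R P 1 = E_R P 2" by simp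
qed

end
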